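(* Let $G$ be a finite cyclic group. Then $g(OD(G))=3$ if and only if $|G|$ is a composite number.
   Context: For a finite group $G$, $o(x)$ denotes the order of $x\in G$. The order-divisor graph $OD(G)$ is the simple undirected graph with vertex set $G$, in which two distinct vertices $x,y$ are adjacent if and only if $o(x)\neq o(y)$ and either $o(x)\mid o(y)$ or $o(y)\mid o(x)$. The girth $g(\Gamma)$ of a graph $\Gamma$ is the length of a shortest cycle in $\Gamma$ (taken to be $0$ if $\Gamma$ has no cycle). *)

theory Defs
  imports "HOL-Algebra.Algebra" "HOL-Computational_Algebra.Primes"
begin

definition has_cycle_of_length :: "'a set \<Rightarrow> ('a \<Rightarrow> 'a \<Rightarrow> bool) \<Rightarrow> nat \<Rightarrow> bool" where
  "has_cycle_of_length V E k \<longleftrightarrow>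
     k \<ge> 3 \<and> (\<exists>v :: nat \<Rightarrow> 'a. inj_on v {..<k} \<and> v ` {..<k} \<subseteq> V \<and>
        (\<forall>i<k. E (v i) (v ((i + 1) mod k))))"

definition girth :: "'a set \<Rightarrow> ('a \<Rightarrow> 'a \<Rightarrow> bool) \<Rightarrow> nat" where
  "girth V E = (if \<exists>k. has_cycle_of_length V E k then (LEAST k. has_cycle_of_length V E k) else 0)"

definition od_adj :: "('a, 'b) monoid_scheme \<Rightarrow> 'a \<Rightarrow> 'a \<Rightarrow> bool" where
  "od_adj G x y \<longleftrightarrow> x \<noteq> y \<and> group.ord G x \<noteq> group.ord G y \<and>
     (group.ord G x dvd group.ord G y \<or> group.ord G y dvd group.ord G x)"

definition composite :: "nat \<Rightarrow> bool" where
  "composite n \<longleftrightarrow> n > 1 \<and> \<not> Factorial_Ring.prime n"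

end

theory Submission
  imports Defs
begin

text \<open>A triangle in OD(G) consists of three elements with pairwise distinct orders, all of which
  divide order G; a group of prime or trivial order admits only the orders 1 and order G, so such
  a triangle forces order G to be composite. Conversely, if d is a proper divisor of a composite
  order G, then in a cyclic group the identity, an element of order d and a generator have orders
  1, d, order G, which divide one another and so form a triangle.\<close>

lemma girth_eq_3_iff: "girth V E = 3 \<longleftrightarrow> has_cycle_of_length V E 3"
proof
  assume girth: "girth V E = 3"
  then have ex: "\<exists>k. has_cycle_of_length V E k"
    unfolding girth_def by (auto split: if_splits)
  then have "has_cycle_of_length V E (LEAST k. has_cycle_of_length V E k)"
    by (rule LeastI_ex)
  with girth ex show "has_cycle_of_length V E 3"
    unfolding girth_def by simp
next
  assume cycle: "has_cycle_of_length V E 3"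
  have "(LEAST k. has_cycle_of_length V E k) = 3"
    by (rule Least_equality) (use cycle in \<open>auto simp: has_cycle_of_length_def\<close>)
  with cycle show "girth V E = 3"
    unfolding girth_def by auto
qed

lemma has_cycle_of_length_3_iff:
  "has_cycle_of_length V E 3 \<longleftrightarrow>
     (\<exists>a\<in>V. \<exists>b\<in>V. \<exists>c\<in>V. a \<noteq> b \<and> b \<noteq> c \<and> a \<noteq> c \<and> E a b \<and> E b c \<and> E c a)"
proof
  assume "has_cycle_of_length V E 3"
  then obtain v :: "nat \<Rightarrow> 'a" where v: "inj_on v {..<3}" "v ` {..<3} \<subseteq> V"
      "\<forall>i<3. E (v i) (v ((i + 1) mod 3))"
    unfolding has_cycle_of_length_def by blast
  have "v 0 \<noteq> v 1" "v 1 \<noteq> v 2" "v 0 \<noteq> v 2"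
    using inj_onD[OF v(1), of 0 1] inj_onD[OF v(1), of 1 2] inj_onD[OF v(1), of 0 2] by auto
  moreover have "E (v 0) (v 1)" "E (v 1) (v 2)" "E (v 2) (v 0)"
    using v(3)[rule_format, of 0] v(3)[rule_format, of 1] v(3)[rule_format, of 2]
    by (simp_all add: numeral_2_eq_2)
  moreover have "v 0 \<in> V" "v 1 \<in> V" "v 2 \<in> V"
    using v(2) by auto
  ultimately show "\<exists>a\<in>V. \<exists>b\<in>V. \<exists>c\<in>V. a \<noteq> b \<and> b \<noteq> c \<and> a \<noteq> c \<and> E a b \<and> E b c \<and> E c a"
    by blast
next
  assume "\<exists>a\<in>V. \<exists>b\<in>V. \<exists>c\<in>V. a \<noteq> b \<and> b \<noteq> c \<and> a \<noteq> c \<and> E a b \<and> E b c \<and> E c a"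
  then obtain a b c where abc: "a \<in> V" "b \<in> V" "c \<in> V" "a \<noteq> b" "b \<noteq> c" "a \<noteq> c"
      "E a b" "E b c" "E c a"
    by blast
  define v where "v i = (if i = 0 then a else if i = 1 then b else c)" for i :: nat
  have lt3: "{..<3::nat} = {0, 1, 2}"
    by auto
  have "inj_on v {..<3}" "v ` {..<3} \<subseteq> V"
    using abc by (auto simp: lt3 v_def inj_on_def)
  moreover have "E (v i) (v ((i + 1) mod 3))" if "i < 3" for i
  proof -
    from that have "i = 0 \<or> i = 1 \<or> i = 2"
      by auto
    with abc show ?thesis
      by (auto simp: v_def)
  qed
  ultimately show "has_cycle_of_length V E 3"
    unfolding has_cycle_of_length_def by auto
qed

lemma composite_iff_proper_divisor:
  "composite n \<longleftrightarrow> (\<exists>d. d dvd n \<and> 1 < d \<and> d < n)"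
proof
  assume "composite n"
  then obtain d where d: "d dvd n" "d \<noteq> 1" "d \<noteq> n" "1 < n"
    unfolding composite_def prime_nat_iff by auto
  then have "d \<noteq> 0" "d \<le> n"
    by (auto intro: dvd_imp_le)
  with d show "\<exists>d. d dvd n \<and> 1 < d \<and> d < n"
    by (intro exI[of _ d]) auto
next
  assume "\<exists>d. d dvd n \<and> 1 < d \<and> d < n"
  then show "composite n"
    unfolding composite_def prime_nat_iff by auto
qed

lemma three_distinct_divisors_imp_composite:
  fixes a b c n :: nat
  assumes "n > 0" and "a dvd n" "b dvd n" "c dvd n" and "a \<noteq> b" "b \<noteq> c" "a \<noteq> c"
  shows "composite n"
proof -
  obtain d where d: "d \<in> {a, b, c}" "d \<noteq> 1" "d \<noteq> n"
    using assms(5-7) by blast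
  moreover have "d dvd n"
    using d(1) assms(2-4) by blast
  moreover from this have "0 < d" "d \<le> n"
    using \<open>n > 0\<close> by (auto intro: dvd_imp_le)
  ultimately show ?thesis
    unfolding composite_iff_proper_divisor by (intro exI[of _ d]) auto
qed

lemma (in group) ord_pow_ord_div:
  assumes "x \<in> carrier G" and "d dvd ord x" and "ord x > 0"
  shows "ord (x [^] (ord x div d)) = d"
proof -
  obtain k where k: "ord x = d * k"
    using assms(2) by blast
  with assms(3) have "k \<noteq> 0" "d \<noteq> 0"
    by auto
  with k show ?thesis
    using ord_pow[OF assms(1), of k] by simp
qed

lemma (in group) cyclic_group_has_element_of_order:
  assumes "finite (carrier G)" and "cyclic_group G" and "d dvd order G"
  obtains x where "x \<in> carrier G" "ord x = d"
proof -
  obtain g where g: "g \<in> carrier G" "subgroup_generated G {g} = G"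
    using assms(2) unfolding cyclic_group_def by blast
  then have ord_g: "ord g = order G"
    using cyclic_order_is_ord by simp
  with assms(1) have "ord g > 0"
    by (simp add: order_gt_0_iff_finite)
  then have "ord (g [^] (ord g div d)) = d"
    using ord_pow_ord_div[OF g(1)] assms(3) ord_g by simp
  with g(1) show ?thesis
    using that by blast
qed

lemma (in group) od_cycle_3_imp_composite_order:
  assumes "finite (carrier G)" and "has_cycle_of_length (carrier G) (od_adj G) 3"
  shows "composite (order G)"
proof -
  obtain x y z where "x \<in> carrier G" "y \<in> carrier G" "z \<in> carrier G"
      and "od_adj G x y" "od_adj G y z" "od_adj G z x"
    using assms(2) unfolding has_cycle_of_length_3_iff by blast
  then show ?thesis
    using three_distinct_divisors_imp_composite[of "order G" "ord x" "ord y" "ord z"] assms(1)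
    by (auto simp: od_adj_def order_gt_0_iff_finite ord_dvd_group_order)
qed

lemma (in group) od_cycle_3_of_composite_order:
  assumes "finite (carrier G)" and "cyclic_group G" and "composite (order G)"
  shows "has_cycle_of_length (carrier G) (od_adj G) 3"
proof -
  obtain d where d: "d dvd order G" "1 < d" "d < order G"
    using assms(3) unfolding composite_iff_proper_divisor by blast
  obtain y where y: "y \<in> carrier G" "ord y = d"
    using cyclic_group_has_element_of_order[OF assms(1,2) d(1)] .
  obtain z where z: "z \<in> carrier G" "ord z = order G"
    using cyclic_group_has_element_of_order[OF assms(1,2) dvd_refl] .
  have orders: "ord \<one> = 1" "ord y = d" "ord z = order G"
    using y z by simp_all
  then have "\<one> \<noteq> y" "y \<noteq> z" "\<one> \<noteq> z"
    using d by (metis less_irrefl less_trans)+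
  moreover have "od_adj G \<one> y" "od_adj G y z" "od_adj G z \<one>"
    using calculation orders d by (auto simp: od_adj_def)
  ultimately show ?thesis
    unfolding has_cycle_of_length_3_iff using y(1) z(1) one_closed by blast
qed

theorem mainTheorem5:
  fixes G :: "('a, 'b) monoid_scheme"
  assumes "group G" and "finite (carrier G)" and "cyclic_group G"
  shows "girth (carrier G) (od_adj G) = 3 \<longleftrightarrow> composite (order G)"
proof -
  interpret group G by fact
  show ?thesis
    unfolding girth_eq_3_iff
    using od_cycle_3_imp_composite_order[OF assms(2)]
      od_cycle_3_of_composite_order[OF assms(2,3)]
    by blast
qed

end
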